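(* Let $X$ be a topological space and $x\in X$. Then $\mathrm{cl}_\theta(\{x\})$ equals the union of all finitely non-Hausdorff subsets of $X$ containing $x$, and also equals the union of all maximal finitely non-Hausdorff subsets of $X$ containing $x$.
   Context: For $A\subseteq X$, $\mathrm{cl}_\theta(A):=\{y\in X:\ \overline{B}\cap A\neq\emptyset$ for every open neighborhood $B$ of $y\}$. A non-empty subset $A$ of $X$ is finitely non-Hausdorff if for every non-empty finite $F\subseteq A$ and every family $\{U_y:y\in F\}$ of open neighborhoods $U_y$ of $y$, $\bigcap_{y\in F}U_y\neq\emptyset$; it is maximal finitely non-Hausdorff if no finitely non-Hausdorff subset of $X$ properly contains it. *)

theory Defs
  imports "HOL-Analysis.Analysis"
begin

definition cl_theta :: "'a::topological_space set \<Rightarrow> 'a set" where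
  "cl_theta A = {y. \<forall>B. open B \<and> y \<in> B \<longrightarrow> closure B \<inter> A \<noteq> {}}"

definition fin_non_hausdorff :: "'a::topological_space set \<Rightarrow> bool" where
  "fin_non_hausdorff A \<longleftrightarrow> A \<noteq> {} \<and>
     (\<forall>F (U :: 'a \<Rightarrow> 'a set). finite F \<and> F \<noteq> {} \<and> F \<subseteq> A \<and>
         (\<forall>y\<in>F. open (U y) \<and> y \<in> U y) \<longrightarrow> (\<Inter>y\<in>F. U y) \<noteq> {})"

definition max_fin_non_hausdorff :: "'a::topological_space set \<Rightarrow> bool" where
  "max_fin_non_hausdorff A \<longleftrightarrow> fin_non_hausdorff A \<and>
     \<not> (\<exists>B. fin_non_hausdorff B \<and> A \<subset> B)"

end

theory Submission
  imports Defs
begin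

text \<open>A point \<open>y\<close> lies in the \<open>\<theta>\<close>-closure of \<open>{x}\<close> exactly when \<open>x\<close> and \<open>y\<close> cannot be
  separated by disjoint open sets, i.e. exactly when \<open>{x, y}\<close> is finitely non-Hausdorff.
  Since being finitely non-Hausdorff passes to non-empty subsets, every finitely non-Hausdorff
  set containing \<open>x\<close> lies in \<open>cl\<^sub>\<theta>({x})\<close>. Conversely, the union of a chain of finitely
  non-Hausdorff sets is again one (a finite subset already lies in a single member), so by
  Zorn's lemma \<open>{x, y}\<close> extends to a maximal finitely non-Hausdorff set.\<close>

lemma in_closure_iff_open_meets:
  fixes x :: "'a::topological_space"
  shows "x \<in> closure V \<longleftrightarrow> (\<forall>U. open U \<and> x \<in> U \<longrightarrow> U \<inter> V \<noteq> {})"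
proof
  assume "x \<in> closure V"
  then show "\<forall>U. open U \<and> x \<in> U \<longrightarrow> U \<inter> V \<noteq> {}"
    using open_Int_closure_eq_empty by blast
next
  assume "\<forall>U. open U \<and> x \<in> U \<longrightarrow> U \<inter> V \<noteq> {}"
  then show "x \<in> closure V"
    unfolding closure_iff_nhds_not_empty by blast
qed

lemma in_cl_theta_singleton_iff:
  fixes x y :: "'a::topological_space"
  shows "y \<in> cl_theta {x} \<longleftrightarrow> \<not> (\<exists>U V. open U \<and> open V \<and> x \<in> U \<and> y \<in> V \<and> U \<inter> V = {})"
proof -
  have "y \<in> cl_theta {x} \<longleftrightarrow> (\<forall>V. open V \<and> y \<in> V \<longrightarrow> x \<in> closure V)"
    by (simp add: cl_theta_def)
  then show ?thesis
    by (auto simp: in_closure_iff_open_meets)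
qed

lemma fin_non_hausdorff_subset:
  assumes "fin_non_hausdorff A" "B \<subseteq> A" "B \<noteq> {}"
  shows "fin_non_hausdorff B"
  using assms unfolding fin_non_hausdorff_def by blast

lemma fin_non_hausdorff_pair_iff:
  fixes x y :: "'a::topological_space"
  shows "fin_non_hausdorff {x, y} \<longleftrightarrow>
    \<not> (\<exists>U V. open U \<and> open V \<and> x \<in> U \<and> y \<in> V \<and> U \<inter> V = {})"
proof
  assume fnh: "fin_non_hausdorff {x, y}"
  show "\<not> (\<exists>U V. open U \<and> open V \<and> x \<in> U \<and> y \<in> V \<and> U \<inter> V = {})"
  proof (cases "x = y")
    case True
    then show ?thesis by blast
  next
    case False
    show ?thesis
    proof clarify
      fix U V :: "'a set"
      assume UV: "open U" "open V" "x \<in> U" "y \<in> V" "U \<inter> V = {}"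
      let ?W = "\<lambda>z. if z = x then U else V"
      have "\<forall>z\<in>{x, y}. open (?W z) \<and> z \<in> ?W z"
        using UV False by simp
      then have "(\<Inter>z\<in>{x, y}. ?W z) \<noteq> {}"
        using fnh[unfolded fin_non_hausdorff_def, THEN conjunct2, rule_format, of "{x, y}" ?W]
        by simp
      with UV False show False by auto
    qed
  qed
next
  assume sep: "\<not> (\<exists>U V. open U \<and> open V \<and> x \<in> U \<and> y \<in> V \<and> U \<inter> V = {})"
  show "fin_non_hausdorff {x, y}"
    unfolding fin_non_hausdorff_def
  proof (intro conjI allI impI)
    fix F and W :: "'a \<Rightarrow> 'a set"
    assume F: "finite F \<and> F \<noteq> {} \<and> F \<subseteq> {x, y} \<and> (\<forall>z\<in>F. open (W z) \<and> z \<in> W z)"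
    then consider "F = {x}" | "F = {y}" | "F = {x, y}" by blast
    then show "(\<Inter>z\<in>F. W z) \<noteq> {}"
      by cases (use F sep in auto)
  qed simp
qed

lemma fin_non_hausdorff_Union_chain:
  assumes "subset.chain S C" "C \<noteq> {}" "\<And>A. A \<in> S \<Longrightarrow> fin_non_hausdorff A"
  shows "fin_non_hausdorff (\<Union>C)"
  unfolding fin_non_hausdorff_def
proof (intro conjI allI impI)
  have fnh: "fin_non_hausdorff A" if "A \<in> C" for A
    using assms(1,3) that unfolding subset.chain_def by blast
  then show "\<Union>C \<noteq> {}"
    using assms(2) unfolding fin_non_hausdorff_def by blast
  fix F and U :: "'a \<Rightarrow> 'a set"
  assume F: "finite F \<and> F \<noteq> {} \<and> F \<subseteq> \<Union>C \<and> (\<forall>y\<in>F. open (U y) \<and> y \<in> U y)"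
  then obtain A where "A \<in> C" "F \<subseteq> A"
    using finite_subset_Union_chain[of F C S] assms(1,2) by blast
  with fnh F show "(\<Inter>y\<in>F. U y) \<noteq> {}"
    unfolding fin_non_hausdorff_def by blast
qed

lemma fin_non_hausdorff_imp_subset_max:
  assumes "fin_non_hausdorff A"
  obtains M where "max_fin_non_hausdorff M" "A \<subseteq> M"
proof -
  let ?S = "{B. fin_non_hausdorff B \<and> A \<subseteq> B}"
  have "\<exists>M\<in>?S. \<forall>X\<in>?S. M \<subseteq> X \<longrightarrow> X = M"
  proof (rule subset_Zorn_nonempty)
    show "?S \<noteq> {}"
      using assms by blast
    show "\<Union>C \<in> ?S" if "C \<noteq> {}" "subset.chain ?S C" for C
      using fin_non_hausdorff_Union_chain[OF that(2,1)] that
      unfolding subset.chain_def by blast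
  qed
  then obtain M where "M \<in> ?S" "\<forall>X\<in>?S. M \<subseteq> X \<longrightarrow> X = M" ..
  then have "max_fin_non_hausdorff M" "A \<subseteq> M"
    unfolding max_fin_non_hausdorff_def by (blast dest: psubset_imp_subset)+
  then show thesis by (rule that)
qed

theorem corollary2p13:
  fixes x :: "'a::topological_space"
  shows "cl_theta {x} = \<Union> {A. fin_non_hausdorff A \<and> x \<in> A}
     \<and> cl_theta {x} = \<Union> {A. max_fin_non_hausdorff A \<and> x \<in> A}"
proof -
  have fnh_sub: "\<Union> {A. fin_non_hausdorff A \<and> x \<in> A} \<subseteq> cl_theta {x}"
  proof clarify
    fix y A assume "fin_non_hausdorff A" "x \<in> A" "y \<in> A"
    then have "fin_non_hausdorff {x, y}"
      using fin_non_hausdorff_subset[of A "{x, y}"] by blast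
    then show "y \<in> cl_theta {x}"
      by (simp add: fin_non_hausdorff_pair_iff in_cl_theta_singleton_iff)
  qed
  have sub_max: "cl_theta {x} \<subseteq> \<Union> {A. max_fin_non_hausdorff A \<and> x \<in> A}"
  proof
    fix y assume "y \<in> cl_theta {x}"
    then have "fin_non_hausdorff {x, y}"
      by (simp add: fin_non_hausdorff_pair_iff in_cl_theta_singleton_iff)
    then obtain M where "max_fin_non_hausdorff M" "{x, y} \<subseteq> M"
      by (rule fin_non_hausdorff_imp_subset_max)
    then show "y \<in> \<Union> {A. max_fin_non_hausdorff A \<and> x \<in> A}" by blast
  qed
  have "{A. max_fin_non_hausdorff A \<and> x \<in> A} \<subseteq> {A. fin_non_hausdorff A \<and> x \<in> A}"
    by (auto simp: max_fin_non_hausdorff_def)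
  then have max_sub_fnh:
    "\<Union> {A. max_fin_non_hausdorff A \<and> x \<in> A} \<subseteq> \<Union> {A. fin_non_hausdorff A \<and> x \<in> A}"
    by (rule Union_mono)
  show ?thesis
    using order_trans[OF sub_max max_sub_fnh] order_trans[OF max_sub_fnh fnh_sub] fnh_sub sub_max
    by (intro conjI equalityI)
qed

end
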